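(* Let $d\ge2$ be an integer and let $\gamma_1=\{-1+\frac{\sin(\phi(d-1))}{\sin(\phi d)}e^{i\phi}:\phi\in[0,\pi/d)\}$ (the point at $\phi=0$ being $-1/d$). For every $v\in\gamma_1\setminus\{-1/d\}$, the solutions $u$ of $R(u,v)=u(1+u)^{d-1}-v(1+v)^{d-1}=0$ are simple zeros of $u\mapsto R(u,v)$. *)

theory Defs
  imports "HOL-Analysis.Analysis"
begin

definition R :: "nat \<Rightarrow> complex \<Rightarrow> complex \<Rightarrow> complex" where
  "R d u v = u * (1 + u) ^ (d - 1) - v * (1 + v) ^ (d - 1)"

definition gamma1 :: "nat \<Rightarrow> complex set" where
  "gamma1 d = {(if \<phi> = 0 then - 1 / of_nat d
                else -1 + complex_of_real (sin (\<phi> * (real d - 1)) / sin (\<phi> * real d)) * cis \<phi>)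
               | \<phi>. 0 \<le> \<phi> \<and> \<phi> < pi / real d}"

end

theory Submission imports Defs begin

(*
  Write n = d - 1 and f w = w (1 + w)^n, so that R d u v = f u - f v and
  f' w = (1 + w)^(n - 1) (1 + (n + 1) w). A multiple zero u of R d _ v therefore makes f v a
  critical value of f: either f (-1) = 0 or f (-1/(n+1)) = -n^n/(n+1)^(n+1).
  On gamma1 the value f v is real, namely -Q(phi) with
  Q(phi) = sin(n phi)^n sin phi / sin((n+1) phi)^(n+1). As phi -> 0, Q tends to
  n^n/(n+1)^(n+1), and Q is strictly increasing on (0, pi/(n+1)) because its logarithmic
  derivative n^2 cot(n phi) + cot phi - (n+1)^2 cot((n+1) phi) is positive. Hence f v is
  strictly smaller than both critical values.
*)

lemma has_field_derivative_times_one_plus_power: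
  fixes u :: "'a::real_normed_field"
  assumes "n \<ge> 1"
  shows "((\<lambda>w. w * (1 + w) ^ n) has_field_derivative (1 + u) ^ (n - 1) * (1 + of_nat (n + 1) * u)) (at u)"
proof -
  obtain k where n: "n = Suc k" using assms by (cases n) auto
  have "((\<lambda>w. w * (1 + w) ^ Suc k) has_field_derivative (1 + u) ^ k * (1 + of_nat (Suc k + 1) * u)) (at u)"
    by (rule derivative_eq_intros refl)+ (simp add: algebra_simps)
  then show ?thesis unfolding n by simp
qed

lemma critical_values_times_one_plus_power:
  fixes u :: "'a::real_normed_field"
  assumes "(1 + u) ^ (n - 1) * (1 + of_nat (n + 1) * u) = 0"
  shows "u * (1 + u) ^ n = 0 \<or> u * (1 + u) ^ n = - (of_nat n ^ n / of_nat (n + 1) ^ (n + 1))"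
  using assms
proof (elim mult_eq_0_iff[THEN iffD1, elim_format] disjE)
  assume "(1 + u) ^ (n - 1) = 0"
  then have "1 + u = 0" "n \<noteq> 0" by (auto simp: power_0_left split: if_splits)
  then show ?thesis by simp
next
  assume "1 + of_nat (n + 1) * u = 0"
  moreover have nz: "(of_nat (n + 1) :: 'a) \<noteq> 0"
    using of_nat_neq_0[of n] by simp
  ultimately have u: "u = - 1 / of_nat (n + 1)"
    by (simp add: field_simps add_eq_0_iff del: of_nat_Suc)
  have "1 + u = of_nat n / of_nat (n + 1)"
    using nz unfolding u by (simp add: divide_simps del: of_nat_Suc) simp
  then show ?thesis
    unfolding u by (simp add: power_divide)
qed

lemma sin_times_cis_diff:
  "complex_of_real (sin a) * cis b - complex_of_real (sin b) * cis a = complex_of_real (sin (a - b))"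
  by (rule complex_eqI) (simp_all add: sin_diff algebra_simps)

definition sin_quotient :: "nat \<Rightarrow> real \<Rightarrow> real" where
  "sin_quotient n x = sin (x * real n) ^ n * sin x / sin (x * (real n + 1)) ^ (n + 1)"

lemma times_one_plus_power_gamma:
  fixes x :: real and v :: complex
  assumes S: "sin (x * (real n + 1)) \<noteq> 0"
    and v: "v = -1 + complex_of_real (sin (x * real n) / sin (x * (real n + 1))) * cis x"
  shows "v * (1 + v) ^ n = - complex_of_real (sin_quotient n x)"
proof -
  define r where "r = sin (x * real n) / sin (x * (real n + 1))"
  have "1 + v = complex_of_real r * cis x"
    unfolding v r_def by simp
  then have pow: "(1 + v) ^ n = complex_of_real (r ^ n) * cis (x * real n)"
    by (simp only: power_mult_distrib Complex.DeMoivre of_real_power mult.commute[of x])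
  have rot: "v * cis (x * real n) = complex_of_real (- sin x / sin (x * (real n + 1)))"
  proof -
    have "v * cis (x * real n) = complex_of_real r * cis (x * (real n + 1)) - cis (x * real n)"
      unfolding v r_def by (simp add: algebra_simps cis_mult)
    also have "\<dots> = (complex_of_real (sin (x * real n)) * cis (x * (real n + 1))
        - complex_of_real (sin (x * (real n + 1))) * cis (x * real n)) / complex_of_real (sin (x * (real n + 1)))"
      using S unfolding r_def by (simp add: field_simps)
    also have "\<dots> = complex_of_real (- sin x / sin (x * (real n + 1)))"
      unfolding sin_times_cis_diff by (simp add: algebra_simps)
    finally show ?thesis .
  qed
  have "v * (1 + v) ^ n = complex_of_real (r ^ n) * (v * cis (x * real n))"
    unfolding pow by (simp only: mult_ac)
  also have "\<dots> = complex_of_real (r ^ n * (- sin x / sin (x * (real n + 1))))"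
    unfolding rot by simp
  finally have "v * (1 + v) ^ n = complex_of_real (r ^ n * (- sin x / sin (x * (real n + 1))))" .
  then show ?thesis
    unfolding sin_quotient_def r_def by (simp add: power_divide)
qed

lemma sin_mult_pos:
  fixes k c x :: real
  assumes "0 < k" "k \<le> c" "0 < x" "x * c < pi"
  shows "0 < sin (x * k)"
proof (rule sin_gt_zero)
  show "0 < x * k" using assms by simp
  have "x * k \<le> x * c" using assms by (simp add: mult_left_mono)
  then show "x * k < pi" using assms by linarith
qed

lemma has_real_derivative_ln_sin:
  fixes k x :: real
  assumes "0 < sin (x * k)"
  shows "((\<lambda>t. ln (sin (t * k))) has_real_derivative k * cot (x * k)) (at x)"
  using assms by (auto intro!: derivative_eq_intros simp: cot_def)

lemma cot_sum_inequality:
  fixes m x :: real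
  assumes "0 < m" "0 < x" "x * (m + 1) < pi"
  shows "(m + 1)\<^sup>2 * cot (x * (m + 1)) < m\<^sup>2 * cot (x * m) + cot x"
proof -
  define a b p q S C where "a = sin (x * m)" "b = sin x" "p = cos x" "q = cos (x * m)"
    "S = sin (x * (m + 1))" "C = cos (x * (m + 1))"
  have pos: "0 < a" "0 < b" "0 < S"
    using assms sin_mult_pos[of m "m + 1" x] sin_mult_pos[of 1 "m + 1" x] sin_mult_pos[of "m + 1" "m + 1" x]
    unfolding a_b_p_q_S_C_def by auto
  have S: "S = a * p + q * b" and C: "C = q * p - a * b"
    unfolding a_b_p_q_S_C_def by (simp_all add: distrib_left sin_add cos_add)
  \<comment> \<open>Over the common denominator \<open>a b S\<close> the difference is a sum of two squares.\<close>
  have "(m\<^sup>2 * cot (x * m) + cot x - (m + 1)\<^sup>2 * cot (x * (m + 1))) * (a * b * S)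
      = m\<^sup>2 * q * b * S + p * a * S - (m + 1)\<^sup>2 * C * a * b"
    using pos unfolding cot_def a_b_p_q_S_C_def[symmetric] by (simp add: field_simps power2_eq_square)
  also have "\<dots> = (m * q * b - a * p)\<^sup>2 + (m + 1)\<^sup>2 * a\<^sup>2 * b\<^sup>2"
    unfolding S C by (simp add: algebra_simps power2_eq_square)
  also have "\<dots> > 0"
    using pos \<open>0 < m\<close> by (simp add: add_nonneg_pos)
  finally show ?thesis
    using mult_pos_pos[OF mult_pos_pos[OF pos(1,2)] pos(3)] by (simp add: zero_less_mult_iff)
qed

lemma sin_quotient_pos_ln:
  assumes "1 \<le> n" "x \<in> {0<..<pi / (real n + 1)}"
  shows "0 < sin_quotient n x"
    and "ln (sin_quotient n x)
      = real n * ln (sin (x * real n)) + ln (sin x) - (real n + 1) * ln (sin (x * (real n + 1)))"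
proof -
  have "0 < x" "x * (real n + 1) < pi"
    using assms by (simp_all add: less_divide_eq)
  then have "0 < sin (x * real n)" "0 < sin x" "0 < sin (x * (real n + 1))"
    using assms sin_mult_pos[of _ "real n + 1" x] sin_mult_pos[of 1 "real n + 1" x] by auto
  then show "0 < sin_quotient n x"
    and "ln (sin_quotient n x)
      = real n * ln (sin (x * real n)) + ln (sin x) - (real n + 1) * ln (sin (x * (real n + 1)))"
    unfolding sin_quotient_def by (simp_all add: ln_mult ln_div ln_realpow distrib_right)
qed

lemma sin_quotient_strict_mono:
  assumes "1 \<le> n"
  shows "strict_mono_on {0<..<pi / (real n + 1)} (sin_quotient n)"
proof (rule strict_mono_onI)
  fix y z assume y: "y \<in> {0<..<pi / (real n + 1)}" and z: "z \<in> {0<..<pi / (real n + 1)}" and "y < z"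
  define h where "h t = real n * ln (sin (t * real n)) + ln (sin t) - (real n + 1) * ln (sin (t * (real n + 1)))"
    for t
  have "h y < h z"
  proof (rule DERIV_pos_imp_increasing[OF \<open>y < z\<close>])
    fix t assume "y \<le> t" "t \<le> z"
    then have "t \<in> {0<..<pi / (real n + 1)}"
      using y z unfolding greaterThanLessThan_iff by linarith
    then have t: "0 < t" "t * (real n + 1) < pi"
      by (simp_all add: less_divide_eq)
    then have "0 < sin (t * real n)" "0 < sin t" "0 < sin (t * (real n + 1))"
      using assms sin_mult_pos[of "real n" "real n + 1" t] sin_mult_pos[of 1 "real n + 1" t]
        sin_mult_pos[of "real n + 1" "real n + 1" t] by auto
    then have "(h has_real_derivative real n * (real n * cot (t * real n)) + cot t
        - (real n + 1) * ((real n + 1) * cot (t * (real n + 1)))) (at t)"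
      unfolding h_def
      by (intro DERIV_diff DERIV_add DERIV_cmult has_real_derivative_ln_sin[of t 1, simplified]
          has_real_derivative_ln_sin)
    moreover have "(real n + 1)\<^sup>2 * cot (t * (real n + 1)) < (real n)\<^sup>2 * cot (t * real n) + cot t"
      using assms t by (intro cot_sum_inequality) auto
    ultimately show "\<exists>D. (h has_real_derivative D) (at t) \<and> 0 < D"
      by (auto simp: power2_eq_square)
  qed
  then have "ln (sin_quotient n y) < ln (sin_quotient n z)"
    by (simp only: sin_quotient_pos_ln(2)[OF assms y] sin_quotient_pos_ln(2)[OF assms z] h_def)
  then show "sin_quotient n y < sin_quotient n z"
    using sin_quotient_pos_ln(1)[OF assms y] sin_quotient_pos_ln(1)[OF assms z] by simp
qed

lemma tendsto_sin_mult_div: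
  fixes k :: real
  shows "((\<lambda>x. sin (x * k) / x) \<longlongrightarrow> k) (at 0)"
proof -
  have "((\<lambda>x. sin (x * k)) has_field_derivative cos (0 * k) * k) (at 0)"
    by (auto intro!: derivative_eq_intros)
  then show ?thesis
    by (simp add: has_field_derivative_iff)
qed

lemma sin_quotient_tendsto: "(sin_quotient n \<longlongrightarrow> real n ^ n / (real n + 1) ^ (n + 1)) (at 0)"
proof -
  have "((\<lambda>x. (sin (x * real n) / x) ^ n * (sin (x * 1) / x) / (sin (x * (real n + 1)) / x) ^ (n + 1))
      \<longlongrightarrow> real n ^ n * 1 / (real n + 1) ^ (n + 1)) (at 0)"
    by (intro tendsto_intros tendsto_sin_mult_div) simp
  then have "((\<lambda>x. (sin (x * real n) / x) ^ n * (sin x / x) / (sin (x * (real n + 1)) / x) ^ (n + 1))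
      \<longlongrightarrow> real n ^ n / (real n + 1) ^ (n + 1)) (at 0)"
    by (simp only: mult_1_right)
  then show ?thesis
  proof (rule Lim_transform_eventually)
    show "\<forall>\<^sub>F x in at 0. (sin (x * real n) / x) ^ n * (sin x / x) / (sin (x * (real n + 1)) / x) ^ (n + 1)
        = sin_quotient n x"
      unfolding sin_quotient_def eventually_at_filter by (simp add: power_divide)
  qed
qed

lemma sin_quotient_gt_limit:
  assumes "1 \<le> n" "x \<in> {0<..<pi / (real n + 1)}"
  shows "real n ^ n / (real n + 1) ^ (n + 1) < sin_quotient n x"
proof -
  note mono = strict_mono_onD[OF sin_quotient_strict_mono[OF assms(1)]]
  have mem: "x / 2 \<in> {0<..<pi / (real n + 1)}" "x \<in> {0<..<pi / (real n + 1)}"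
    using assms(2) unfolding greaterThanLessThan_iff by linarith+
  have "real n ^ n / (real n + 1) ^ (n + 1) \<le> sin_quotient n (x / 2)"
  proof (rule tendsto_le[OF _ tendsto_const])
    show "(sin_quotient n \<longlongrightarrow> real n ^ n / (real n + 1) ^ (n + 1)) (at_right 0)"
      by (rule tendsto_mono[OF at_le[of "{0<..}" UNIV] sin_quotient_tendsto]) simp
    show "\<forall>\<^sub>F y in at_right 0. sin_quotient n y \<le> sin_quotient n (x / 2)"
      unfolding eventually_at_right_field
    proof (intro exI[of _ "x / 2"] conjI allI impI)
      fix y assume y: "0 < y" "y < x / 2"
      then have "y \<in> {0<..<pi / (real n + 1)}"
        using mem(1) unfolding greaterThanLessThan_iff by linarith
      then show "sin_quotient n y \<le> sin_quotient n (x / 2)"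
        using mono mem(1) y(2) by (blast intro: less_imp_le)
    qed (use assms in simp)
  qed simp
  also have "\<dots> < sin_quotient n x"
    using mono[OF mem] assms(2) by simp
  finally show ?thesis .
qed

lemma times_one_plus_power_on_gamma1:
  assumes "1 \<le> n" and v: "v \<in> gamma1 (n + 1) - {- 1 / of_nat (n + 1)}"
  shows "v * (1 + v) ^ n \<noteq> 0" and "v * (1 + v) ^ n \<noteq> - (of_nat n ^ n / of_nat (n + 1) ^ (n + 1))"
proof -
  obtain x where x: "0 \<le> x" "x < pi / real (n + 1)" and v_eq: "v = (if x = 0 then - 1 / of_nat (n + 1)
      else -1 + complex_of_real (sin (x * (real (n + 1) - 1)) / sin (x * real (n + 1))) * cis x)"
    using v unfolding gamma1_def by blast
  have "x \<noteq> 0"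
    using v v_eq by auto
  with x have x_mem: "x \<in> {0<..<pi / (real n + 1)}"
    by (simp add: add.commute)
  have "0 < sin_quotient n x"
    by (rule sin_quotient_pos_ln(1)[OF assms(1) x_mem])
  then have "sin (x * (real n + 1)) \<noteq> 0"
    unfolding sin_quotient_def by auto
  then have "v * (1 + v) ^ n = - complex_of_real (sin_quotient n x)"
    using v_eq \<open>x \<noteq> 0\<close> by (intro times_one_plus_power_gamma) (simp_all add: add.commute)
  moreover have "real n ^ n / (real n + 1) ^ (n + 1) < sin_quotient n x"
    by (rule sin_quotient_gt_limit[OF assms(1) x_mem])
  moreover have "0 < real n ^ n / (real n + 1) ^ (n + 1)"
    using assms(1) by simp
  ultimately show "v * (1 + v) ^ n \<noteq> 0" and "v * (1 + v) ^ n \<noteq> - (of_nat n ^ n / of_nat (n + 1) ^ (n + 1))"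
    by (auto simp: add.commute dest: arg_cong[where f = Re])
qed

theorem lemma5p7:
  fixes d :: nat and v u :: complex
  assumes "d \<ge> 2"
    and "v \<in> gamma1 d - {- 1 / of_nat d}"
    and "R d u v = 0"
  shows "deriv (\<lambda>w. R d w v) u \<noteq> 0"
proof
  assume crit: "deriv (\<lambda>w. R d w v) u = 0"
  define n where "n = d - 1"
  have n: "1 \<le> n" "d = n + 1"
    using assms(1) by (simp_all add: n_def)
  have R: "R d w v = w * (1 + w) ^ n - v * (1 + v) ^ n" for w
    by (simp add: R_def n_def)
  have "((\<lambda>w. R d w v) has_field_derivative (1 + u) ^ (n - 1) * (1 + of_nat (n + 1) * u) - 0) (at u)"
    unfolding R by (intro DERIV_diff has_field_derivative_times_one_plus_power n(1) DERIV_const)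
  with crit have "(1 + u) ^ (n - 1) * (1 + of_nat (n + 1) * u) = 0"
    using DERIV_imp_deriv by fastforce
  then have "u * (1 + u) ^ n = 0 \<or> u * (1 + u) ^ n = - (of_nat n ^ n / of_nat (n + 1) ^ (n + 1))"
    by (rule critical_values_times_one_plus_power)
  moreover have "u * (1 + u) ^ n = v * (1 + v) ^ n"
    using assms(3) unfolding R by simp
  ultimately show False
    using times_one_plus_power_on_gamma1[OF n(1)] assms(2) unfolding n(2) by auto
qed

end
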